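(* Let $p \geq m \geq 1$ and $q \geq s \geq 1$ be integers. Then there is a graph homomorphism from ${\sf M}_p(C_{2q+1})$ to ${\sf M}_m(C_{2s+1})$.
   Context: $C_n$ is the cycle on $n$ vertices. A homomorphism from $G$ to $H$ is a map $f:V(G)\to V(H)$ with $f(u)f(v)\in E(H)$ whenever $uv\in E(G)$. For a graph $G$ with vertex set $V_0=\{\langle 0,j\rangle : 0\le j\le n-1\}$ and edge set $E_0$, and $m>0$, the generalized Mycielskian ${\sf M}_m(G)$ has vertex set $V_0\cup V_1\cup\cdots\cup V_m\cup\{u\}$ where $V_i=\{\langle i,j\rangle: 0\le j\le n-1\}$, and edge set $E_0\cup E_1\cup\cdots\cup E_m\cup\{\langle m,j\rangle u: 0\le j\le n-1\}$, where $E_i=\{\langle i-1,j\rangle\langle i,k\rangle : \langle 0,j\rangle\langle 0,k\rangle\in E_0\}$ for $1\le i\le m$. *)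

theory Defs
  imports Main
begin

text \<open>Graphs are given by a vertex set and a symmetric edge relation (ordered pairs).\<close>

definition graph_hom :: "'a set \<Rightarrow> ('a \<times> 'a) set \<Rightarrow> 'b set \<Rightarrow> ('b \<times> 'b) set \<Rightarrow> ('a \<Rightarrow> 'b) \<Rightarrow> bool" where
  "graph_hom VG EG VH EH f \<longleftrightarrow>
     (\<forall>x\<in>VG. f x \<in> VH) \<and> (\<forall>x y. (x, y) \<in> EG \<longrightarrow> (f x, f y) \<in> EH)"

definition cycle_edges :: "nat \<Rightarrow> (nat \<times> nat) set" where
  "cycle_edges n = {(j, k). j < n \<and> k < n \<and> (k = (j + 1) mod n \<or> j = (k + 1) mod n)}"

text \<open>Vertices of the generalized Mycielskian: Lv i j stands for <i,j>, Apex for u.\<close>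
datatype myc_vertex = Lv nat nat | Apex

definition myc_verts :: "nat \<Rightarrow> nat \<Rightarrow> myc_vertex set" where
  "myc_verts m n = {Lv i j | i j. i \<le> m \<and> j < n} \<union> {Apex}"

definition myc_edges :: "nat \<Rightarrow> nat \<Rightarrow> (nat \<times> nat) set \<Rightarrow> (myc_vertex \<times> myc_vertex) set" where
  "myc_edges m n E =
     {(Lv 0 j, Lv 0 k) | j k. (j, k) \<in> E}
   \<union> {(Lv (i - 1) j, Lv i k) | i j k. 1 \<le> i \<and> i \<le> m \<and> (j, k) \<in> E}
   \<union> {(Lv i k, Lv (i - 1) j) | i j k. 1 \<le> i \<and> i \<le> m \<and> (j, k) \<in> E}
   \<union> {(Lv m j, Apex) | j. j < n}
   \<union> {(Apex, Lv m j) | j. j < n}"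

end

theory Submission
  imports Defs
begin

text \<open>The homomorphism is a composite of two simple maps. Collapsing the levels
  \<open>0, \<dots>, p - m\<close> of \<open>M\<^sub>p(G)\<close> onto level \<open>0\<close> and shifting the remaining levels down
  gives \<open>M\<^sub>p(G) \<rightarrow> M\<^sub>m(G)\<close>, because edges inside the collapsed block become edges of
  \<open>G\<close> on level \<open>0\<close>. A homomorphism \<open>G \<rightarrow> H\<close> applied in every level gives
  \<open>M\<^sub>m(G) \<rightarrow> M\<^sub>m(H)\<close>, and \<open>C\<^sub>2\<^sub>q\<^sub>+\<^sub>1 \<rightarrow> C\<^sub>2\<^sub>s\<^sub>+\<^sub>1\<close> for \<open>s \<le> q\<close> by walking
  around the short cycle once and then oscillating on its last edge.\<close>

lemma graph_hom_comp:
  assumes "graph_hom VG EG VH EH f" and "graph_hom VH EH VK EK g"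
  shows "graph_hom VG EG VK EK (g \<circ> f)"
  using assms by (simp add: graph_hom_def)

lemma sym_cycle_edges: "sym (cycle_edges n)"
  by (auto simp: sym_def cycle_edges_def)

definition cycle_fold :: "nat \<Rightarrow> nat \<Rightarrow> nat" where
  "cycle_fold s j = (if j \<le> 2*s then j else if even (j - 2*s) then 2*s else 2*s - 1)"

lemma cycle_fold_lt: "cycle_fold s j < 2*s + 1"
  by (simp add: cycle_fold_def; linarith)

lemma cycle_fold_successor:
  assumes "1 \<le> s" "s \<le> q" "j < 2*q + 1"
  shows "(cycle_fold s j, cycle_fold s ((j + 1) mod (2*q + 1))) \<in> cycle_edges (2*s + 1)"
proof (cases "j = 2*q")
  case True
  with assms show ?thesis by (auto simp: cycle_fold_def cycle_edges_def)
next
  case False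
  then have succ: "(j + 1) mod (2*q + 1) = j + 1" using assms by simp
  show ?thesis
  proof (cases "j < 2*s")
    case True
    with succ assms show ?thesis by (auto simp: cycle_fold_def cycle_edges_def)
  next
    case False
    then have "even (j - 2*s) \<longleftrightarrow> odd (j + 1 - 2*s)" by (simp add: Suc_diff_le)
    with succ assms False show ?thesis by (auto simp: cycle_fold_def cycle_edges_def)
  qed
qed

lemma graph_hom_cycle_fold:
  assumes "1 \<le> s" "s \<le> q"
  shows "graph_hom {..<2*q + 1} (cycle_edges (2*q + 1))
           {..<2*s + 1} (cycle_edges (2*s + 1)) (cycle_fold s)"
proof -
  have "(cycle_fold s j, cycle_fold s k) \<in> cycle_edges (2*s + 1)"
    if "(j, k) \<in> cycle_edges (2*q + 1)" for j k
    using that cycle_fold_successor[OF assms, of j] cycle_fold_successor[OF assms, of k]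
      sym_cycle_edges[of "2*s + 1"]
    by (auto simp: cycle_edges_def sym_def)
  then show ?thesis using cycle_fold_lt[of s] by (simp add: graph_hom_def)
qed

definition myc_map :: "(nat \<Rightarrow> nat) \<Rightarrow> myc_vertex \<Rightarrow> myc_vertex" where
  "myc_map g v = (case v of Lv i j \<Rightarrow> Lv i (g j) | Apex \<Rightarrow> Apex)"

lemma graph_hom_myc_map:
  assumes "graph_hom {..<n} E {..<n'} E' g"
  shows "graph_hom (myc_verts m n) (myc_edges m n E) (myc_verts m n') (myc_edges m n' E') (myc_map g)"
  using assms unfolding graph_hom_def myc_verts_def myc_edges_def myc_map_def
  by (auto 0 3)

text \<open>Truncated subtraction sends all levels \<open>i \<le> p - m\<close> to level \<open>0\<close>.\<close>
definition myc_collapse :: "nat \<Rightarrow> nat \<Rightarrow> myc_vertex \<Rightarrow> myc_vertex" where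
  "myc_collapse p m v = (case v of Lv i j \<Rightarrow> Lv (i - (p - m)) j | Apex \<Rightarrow> Apex)"

lemma myc_collapse_cross_edge:
  assumes "m \<le> p" "sym E" "1 \<le> i" "i \<le> p" "(j, k) \<in> E"
  shows "(Lv (i - 1 - (p - m)) j, Lv (i - (p - m)) k) \<in> myc_edges m n E
       \<and> (Lv (i - (p - m)) k, Lv (i - 1 - (p - m)) j) \<in> myc_edges m n E"
proof (cases "i \<le> p - m")
  case True
  moreover have "(k, j) \<in> E" using assms(2,5) by (simp add: sym_def)
  ultimately show ?thesis using assms(5) unfolding myc_edges_def by auto
next
  case False
  then have "i - 1 - (p - m) = i - (p - m) - 1" "1 \<le> i - (p - m)" "i - (p - m) \<le> m"
    using assms by auto
  then show ?thesis using assms(5) unfolding myc_edges_def by blast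
qed

lemma graph_hom_myc_collapse:
  assumes "m \<le> p" "sym E"
  shows "graph_hom (myc_verts p n) (myc_edges p n E) (myc_verts m n) (myc_edges m n E)
           (myc_collapse p m)"
proof -
  have "(myc_collapse p m x, myc_collapse p m y) \<in> myc_edges m n E"
    if "(x, y) \<in> myc_edges p n E" for x y
    using that myc_collapse_cross_edge[OF assms] assms(1)
    unfolding myc_edges_def[of p] myc_collapse_def
    by (elim UnE CollectE exE conjE) (auto simp: myc_edges_def)
  then show ?thesis
    by (auto simp: graph_hom_def myc_verts_def myc_collapse_def)
qed

theorem lemma11:
  fixes p m q s :: nat
  assumes "1 \<le> m" and "m \<le> p" and "1 \<le> s" and "s \<le> q"
  shows "\<exists>f. graph_hom
            (myc_verts p (2 * q + 1)) (myc_edges p (2 * q + 1) (cycle_edges (2 * q + 1)))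
            (myc_verts m (2 * s + 1)) (myc_edges m (2 * s + 1) (cycle_edges (2 * s + 1))) f"
proof -
  have "graph_hom (myc_verts p (2*q + 1)) (myc_edges p (2*q + 1) (cycle_edges (2*q + 1)))
          (myc_verts m (2*q + 1)) (myc_edges m (2*q + 1) (cycle_edges (2*q + 1)))
          (myc_collapse p m)"
    using assms(2) sym_cycle_edges by (rule graph_hom_myc_collapse)
  moreover have "graph_hom (myc_verts m (2*q + 1)) (myc_edges m (2*q + 1) (cycle_edges (2*q + 1)))
          (myc_verts m (2*s + 1)) (myc_edges m (2*s + 1) (cycle_edges (2*s + 1)))
          (myc_map (cycle_fold s))"
    using assms(3,4) by (intro graph_hom_myc_map graph_hom_cycle_fold)
  ultimately show ?thesis by (blast intro: graph_hom_comp)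
qed

end
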